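(* Let $\Sigma$ be a finite alphabet. There is a family of linear-time properties $(\varphi_n)_{n\in\mathbb{N}}$ over $\Sigma$ such that, for every $n$, every (nondeterministic) parity automaton $\mathcal{A}$ over $\Sigma$ that is $n$-lasso-precise for $\varphi_n$ (i.e., $L(\mathcal{A})\subseteq\varphi_n$ and $L_n(L(\mathcal{A}))=L_n(\varphi_n)$) has at least $|\Sigma|^n$ states.
   Context: A linear-time property over $\Sigma$ is a set $\varphi \subseteq \Sigma^\omega$. A lasso of length $n$ is a pair $(u,v)$ with $u\in\Sigma^*$, $v\in\Sigma^+$, $|u\cdot v|=n$, inducing the word $u\cdot v^\omega$. For a property $\psi$, $L_n(\psi)=\{u\cdot v^\omega \in \psi \mid u\in\Sigma^*, v\in\Sigma^+, |u\cdot v|=n\}$. A nondeterministic parity automaton over $\Sigma$ is $\mathcal{A}=(Q,Q_0,\delta,\mu)$ with finite state set $Q$, initial states $Q_0\subseteq Q$, transition function $\delta: Q\times\Sigma\to\mathcal{P}(Q)$, and coloring $\mu: Q\to C$ for a finite $C\subset\mathbb{N}$. A run on $\alpha_1\alpha_2\cdots$ is a sequence $q_0q_1\cdots$ with $q_0\in Q_0$ and $q_{i+1}\in\delta(q_i,\alpha_{i+1})$; it is accepting if the highest color occurring infinitely often in $\mu(q_0)\mu(q_1)\cdots$ is even; $L(\mathcal{A})$ is the set of words having an accepting run. *)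

theory Defs
  imports Main
begin

text \<open>Infinite words over the alphabet 'a are functions nat \<Rightarrow> 'a.
  The alphabet \<Sigma> is the (finite) universe of the type 'a.\<close>

type_synonym 'a word = "nat \<Rightarrow> 'a"

definition lasso :: "'a list \<Rightarrow> 'a list \<Rightarrow> 'a word" where
  "lasso u v = (\<lambda>i. if i < length u then u ! i
                    else v ! ((i - length u) mod length v))"

definition lasso_lang :: "nat \<Rightarrow> 'a word set \<Rightarrow> 'a word set" where
  "lasso_lang n \<psi> = {w \<in> \<psi>. \<exists>u v. v \<noteq> [] \<and> length (u @ v) = n \<and> w = lasso u v}"

text \<open>Nondeterministic parity automata; states are natural numbers
  (every finite automaton is isomorphic to one with such states).\<close>

record 'a npa =
  states :: "nat set"
  init :: "nat set"
  trans :: "nat \<Rightarrow> 'a \<Rightarrow> nat set"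
  color :: "nat \<Rightarrow> nat"

definition wf_npa :: "'a npa \<Rightarrow> bool" where
  "wf_npa A \<longleftrightarrow> finite (states A) \<and> init A \<subseteq> states A \<and>
     (\<forall>q \<in> states A. \<forall>a. trans A q a \<subseteq> states A)"

definition is_run :: "'a npa \<Rightarrow> 'a word \<Rightarrow> (nat \<Rightarrow> nat) \<Rightarrow> bool" where
  "is_run A w r \<longleftrightarrow> r 0 \<in> init A \<and> (\<forall>i. r (Suc i) \<in> trans A (r i) (w i))"

definition parity_accepting :: "'a npa \<Rightarrow> (nat \<Rightarrow> nat) \<Rightarrow> bool" where
  "parity_accepting A r \<longleftrightarrow>
     (\<exists>c. even c \<and> (\<exists>\<^sub>\<infinity>i. color A (r i) = c) \<and>
          (\<forall>c'. (\<exists>\<^sub>\<infinity>i. color A (r i) = c') \<longrightarrow> c' \<le> c))"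

definition npa_lang :: "'a npa \<Rightarrow> 'a word set" where
  "npa_lang A = {w. \<exists>r. is_run A w r \<and> parity_accepting A r}"

definition lasso_precise :: "nat \<Rightarrow> 'a npa \<Rightarrow> 'a word set \<Rightarrow> bool" where
  "lasso_precise n A \<phi> \<longleftrightarrow> npa_lang A \<subseteq> \<phi> \<and> lasso_lang n (npa_lang A) = lasso_lang n \<phi>"

end

theory Submission
  imports Defs
begin

text \<open>Take \<open>\<phi>\<^sub>n\<close> to be the words of period \<open>n\<close>. Each of the \<open>|\<Sigma>|\<^sup>n\<close> words
  \<open>v\<^sup>\<omega>\<close> with \<open>|v| = n\<close> is an \<open>n\<close>-lasso of \<open>\<phi>\<^sub>n\<close>, so an \<open>n\<close>-lasso-precise automaton
  accepts all of them. If accepting runs on \<open>u\<^sup>\<omega>\<close> and \<open>v\<^sup>\<omega>\<close> were in the same state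
  after \<open>n\<close> steps, splicing them would give an accepting run on \<open>u v\<^sup>\<omega>\<close>, which
  has period \<open>n\<close> only if \<open>u = v\<close>. Hence the states reached after \<open>n\<close> steps
  separate the \<open>|\<Sigma>|\<^sup>n\<close> words.\<close>

definition periodic_words :: "nat \<Rightarrow> 'a word set" where
  "periodic_words n = {w. \<forall>i. w (i + n) = w i}"

lemma run_in_states:
  assumes "wf_npa A" "is_run A w r"
  shows "r i \<in> states A"
  using assms by (induction i) (auto simp: wf_npa_def is_run_def, blast)

lemma is_run_splice:
  assumes "is_run A w r" "is_run A w' r'" "r k = r' k"
  shows "is_run A (\<lambda>i. if i < k then w i else w' i) (\<lambda>i. if i \<le> k then r i else r' i)"
  using assms by (auto simp: is_run_def) (metis le_antisym not_less_eq_eq)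

lemma parity_accepting_eventually_eq:
  assumes "\<forall>i\<ge>k. r i = r' i" "parity_accepting A r'"
  shows "parity_accepting A r"
proof -
  have "(\<exists>\<^sub>\<infinity>i. color A (r i) = c) \<longleftrightarrow> (\<exists>\<^sub>\<infinity>i. color A (r' i) = c)" for c
    using assms(1) by (intro frequently_cong[where P = "\<lambda>i. i \<ge> k"])
      (auto simp: cofinite_eq_sequentially eventually_sequentially)
  then show ?thesis
    using assms(2) by (simp add: parity_accepting_def)
qed

text \<open>A fooling-set argument: accepting runs of different \<open>w u\<close> cannot share their
  state after \<open>k\<close> steps, as they could otherwise be spliced.\<close>

lemma card_le_states_if_splices_rejected:
  assumes "wf_npa A"
    and accepted: "\<And>u. u \<in> U \<Longrightarrow> w u \<in> npa_lang A"
    and splice_rejected: "\<And>u u'. u \<in> U \<Longrightarrow> u' \<in> U \<Longrightarrow>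
           (\<lambda>i. if i < k then w u i else w u' i) \<in> npa_lang A \<Longrightarrow> u = u'"
  shows "card U \<le> card (states A)"
proof -
  have "\<forall>u\<in>U. \<exists>r. is_run A (w u) r \<and> parity_accepting A r"
    using accepted by (simp add: npa_lang_def)
  then obtain R where R: "\<And>u. u \<in> U \<Longrightarrow> is_run A (w u) (R u) \<and> parity_accepting A (R u)"
    by (metis bchoice)
  have "inj_on (\<lambda>u. R u k) U"
  proof (rule inj_onI)
    fix u u' assume u: "u \<in> U" and u': "u' \<in> U" and same_state: "R u k = R u' k"
    have "is_run A (\<lambda>i. if i < k then w u i else w u' i) (\<lambda>i. if i \<le> k then R u i else R u' i)"
      using R[OF u] R[OF u'] same_state by (simp add: is_run_splice)
    moreover have "parity_accepting A (\<lambda>i. if i \<le> k then R u i else R u' i)"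
      by (rule parity_accepting_eventually_eq[where k = "Suc k"]) (use R[OF u'] in auto)
    ultimately have "(\<lambda>i. if i < k then w u i else w u' i) \<in> npa_lang A"
      unfolding npa_lang_def by blast
    then show "u = u'"
      using splice_rejected[OF u u'] by blast
  qed
  moreover have "(\<lambda>u. R u k) ` U \<subseteq> states A"
    using R run_in_states[OF \<open>wf_npa A\<close>] by blast
  moreover have "finite (states A)"
    using \<open>wf_npa A\<close> by (simp add: wf_npa_def)
  ultimately show ?thesis
    by (rule card_inj_on_le)
qed

lemma lasso_lang_subset_npa_lang_if_lasso_precise:
  assumes "lasso_precise n A \<phi>"
  shows "lasso_lang n \<phi> \<subseteq> npa_lang A"
proof -
  have "lasso_lang n \<phi> = lasso_lang n (npa_lang A)"
    using assms by (simp add: lasso_precise_def)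
  also have "\<dots> \<subseteq> npa_lang A"
    by (auto simp: lasso_lang_def)
  finally show ?thesis .
qed

lemma lasso_Nil: "lasso [] v = (\<lambda>i. v ! (i mod length v))"
  by (simp add: lasso_def)

lemma lasso_Nil_in_lasso_lang_periodic:
  assumes "length v = n" "n \<ge> 1"
  shows "lasso [] v \<in> lasso_lang n (periodic_words n)"
proof -
  have "lasso [] v \<in> periodic_words n"
    using assms by (simp add: periodic_words_def lasso_Nil)
  moreover have "v \<noteq> []"
    using assms by auto
  ultimately show ?thesis
    using assms unfolding lasso_lang_def by force
qed

lemma lasso_eq_splice:
  assumes "length u = length v"
  shows "lasso u v = (\<lambda>i. if i < length u then lasso [] u i else lasso [] v i)"
proof
  fix i
  show "lasso u v i = (if i < length u then lasso [] u i else lasso [] v i)"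
    using assms by (cases "i < length u") (simp_all add: lasso_def le_mod_geq)
qed

lemma lasso_periodic_imp_eq:
  assumes "length u = n" "length v = n" "lasso u v \<in> periodic_words n"
  shows "u = v"
proof (rule nth_equalityI)
  show "length u = length v"
    using assms by simp
  fix i assume "i < length u"
  then have "u ! i = lasso u v i" and "v ! i = lasso u v (i + n)"
    using assms(1,2) by (simp_all add: lasso_def)
  then show "u ! i = v ! i"
    using assms(3) by (simp add: periodic_words_def)
qed

theorem theorem2:
  "\<exists>\<phi> :: nat \<Rightarrow> ('a::finite) word set. \<forall>n \<ge> 1. \<forall>A :: 'a npa.
     wf_npa A \<and> lasso_precise n A (\<phi> n) \<longrightarrow> card (UNIV :: 'a set) ^ n \<le> card (states A)"
proof (intro exI[of _ periodic_words] allI impI, elim conjE)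
  fix n :: nat and A :: "'a npa"
  assume "n \<ge> 1" "wf_npa A" and precise: "lasso_precise n A (periodic_words n)"
  have "card {v :: 'a list. length v = n} \<le> card (states A)"
  proof (rule card_le_states_if_splices_rejected[where w = "lasso []" and k = n, OF \<open>wf_npa A\<close>])
    fix v :: "'a list" assume "v \<in> {v. length v = n}"
    then show "lasso [] v \<in> npa_lang A"
      using lasso_Nil_in_lasso_lang_periodic \<open>n \<ge> 1\<close>
        lasso_lang_subset_npa_lang_if_lasso_precise[OF precise] by blast
  next
    fix u v :: "'a list"
    assume u: "u \<in> {v. length v = n}" and v: "v \<in> {v. length v = n}"
      and spliced: "(\<lambda>i. if i < n then lasso [] u i else lasso [] v i) \<in> npa_lang A"
    have "lasso u v \<in> npa_lang A"
      using lasso_eq_splice[of u v] u v spliced by simp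
    then have "lasso u v \<in> periodic_words n"
      using precise unfolding lasso_precise_def by blast
    then show "u = v"
      using lasso_periodic_imp_eq u v by blast
  qed
  then show "card (UNIV :: 'a set) ^ n \<le> card (states A)"
    using card_lists_length_eq[of "UNIV :: 'a set" n] by simp
qed

end
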